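(* For every $p\geq 1$, the function $d_{\mathrm{GM},p}$ is an extended quasi-metric on $\mathcal{M}^m$. That is, for all mm-spaces $\mathcal{X},\mathcal{Y},\mathcal{Z}$: (i) $d_{\mathrm{GM},p}(\mathcal{X},\mathcal{Y})\in[0,\infty]$; (ii) $d_{\mathrm{GM},p}(\mathcal{X},\mathcal{Y})=0$ if and only if $\mathcal{X}$ and $\mathcal{Y}$ are isomorphic; (iii) $d_{\mathrm{GM},p}(\mathcal{X},\mathcal{Z})\leq d_{\mathrm{GM},p}(\mathcal{X},\mathcal{Y})+d_{\mathrm{GM},p}(\mathcal{Y},\mathcal{Z})$. In particular, $d_{\mathrm{GM},p}$ depends only on the isomorphism classes of its arguments; it may take the value $\infty$ and need not be symmetric.
   Context: A metric measure space (mm-space) is a triple $\mathcal{X}=(X,d_X,\mu_X)$ where $(X,d_X)$ is a compact metric space and $\mu_X$ is a Borel probability measure on $X$ with full support ($\mathrm{supp}[\mu_X]=X$). An isomorphism $\mathcal{X}\to\mathcal{Y}$ is a map $\phi:X\to Y$ that is an isometry and satisfies $\phi_\#\mu_X=\mu_Y$; $\mathcal{M}^m$ denotes the collection of isomorphism classes of mm-spaces. For mm-spaces $\mathcal{X},\mathcal{Y}$, let $\mathcal{T}(\mu_X,\mu_Y)$ be the set of Borel measurable maps $\phi:X\to Y$ with $\phi_\#\mu_X=\mu_Y$. For $p\in[1,\infty)$ the Gromov–Monge $p$-distance is $$d_{\mathrm{GM},p}(\mathcal{X},\mathcal{Y})=\inf_{\phi\in\mathcal{T}(\mu_X,\mu_Y)}\left(\iint_{X\times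 X}\big|d_X(x,x')-d_Y(\phi(x),\phi(x'))\big|^p\,\mu_X(dx)\,\mu_X(dx')\right)^{1/p},$$ with the convention $d_{\mathrm{GM},p}(\mathcal{X},\mathcal{Y})=\infty$ if $\mathcal{T}(\mu_X,\mu_Y)=\emptyset$. An extended quasi-metric is a function satisfying all metric axioms except symmetry and allowed to take the value $\infty$. *)

theory Defs
  imports "HOL-Probability.Probability"
begin

definition mm_space :: "'a set \<Rightarrow> ('a \<Rightarrow> 'a \<Rightarrow> real) \<Rightarrow> 'a measure \<Rightarrow> bool" where
  "mm_space X d mu \<longleftrightarrow>
     Metric_space X d \<and>
     compact_space (Metric_space.mtopology X d) \<and>
     prob_space mu \<and>
     space mu = X \<and>
     sets mu = sigma_sets X {U. openin (Metric_space.mtopology X d) U} \<and>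
     (\<forall>U. openin (Metric_space.mtopology X d) U \<and> U \<noteq> {} \<longrightarrow> emeasure mu U > 0)"

definition mm_iso ::
  "'a set \<Rightarrow> ('a \<Rightarrow> 'a \<Rightarrow> real) \<Rightarrow> 'a measure \<Rightarrow>
   'b set \<Rightarrow> ('b \<Rightarrow> 'b \<Rightarrow> real) \<Rightarrow> 'b measure \<Rightarrow> bool" where
  "mm_iso X dX muX Y dY muY \<longleftrightarrow>
     (\<exists>\<phi>. bij_betw \<phi> X Y \<and> (\<forall>x\<in>X. \<forall>x'\<in>X. dY (\<phi> x) (\<phi> x') = dX x x') \<and>
          \<phi> \<in> measurable muX muY \<and> distr muX muY \<phi> = muY)"

definition ennroot :: "real \<Rightarrow> ennreal \<Rightarrow> ennreal" where
  "ennroot p x = (if x = \<top> then \<top> else ennreal (enn2real x powr (1 / p)))"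

definition transport_maps :: "'a measure \<Rightarrow> 'b measure \<Rightarrow> ('a \<Rightarrow> 'b) set" where
  "transport_maps muX muY = {\<phi>. \<phi> \<in> measurable muX muY \<and> distr muX muY \<phi> = muY}"

text \<open>Gromov--Monge p-distance (infimum over the empty set is infinity).\<close>

definition dGM ::
  "real \<Rightarrow> ('a \<Rightarrow> 'a \<Rightarrow> real) \<Rightarrow> 'a measure \<Rightarrow>
   ('b \<Rightarrow> 'b \<Rightarrow> real) \<Rightarrow> 'b measure \<Rightarrow> ennreal" where
  "dGM p dX muX dY muY =
     (INF \<phi>\<in>transport_maps muX muY.
        ennroot p (\<integral>\<^sup>+ z. ennreal (\<bar>dX (fst z) (snd z) - dY (\<phi> (fst z)) (\<phi> (snd z))\<bar> powr p)
                        \<partial>(muX \<Otimes>\<^sub>M muX)))"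

end

theory Submission
  imports Defs "HOL-Library.Diagonal_Subsequence"
begin

text \<open>Composing transport maps and applying Minkowski's inequality to the two distortions
  gives the triangle inequality, and an isomorphism has zero distortion.

  Conversely, if \<open>d\<^sub>G\<^sub>M\<^sub>,\<^sub>p(X, Y) = 0\<close>, pick transport maps \<open>\<phi>\<^sub>n\<close> with distortion below
  \<open>2\<^sup>-\<^sup>n\<close>; then \<open>d\<^sub>Y(\<phi>\<^sub>n x, \<phi>\<^sub>n y) \<rightarrow> d\<^sub>X(x, y)\<close> for almost every pair. Since \<open>\<mu>\<^sub>X\<close> has
  full support there is a dense sequence of points for which this holds pairwise and against
  almost every point. By compactness of \<open>Y\<close> a diagonal subsequence of \<open>\<phi>\<^sub>n\<close> converges on
  that sequence, the limit extends to an isometry \<open>\<psi> : X \<rightarrow> Y\<close>, and the subsequence converges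
  to \<open>\<psi>\<close> almost everywhere. Fatou's lemma then gives \<open>\<psi>\<^sub>#\<mu>\<^sub>X(U) \<le> \<mu>\<^sub>Y(U)\<close> for open
  \<open>U\<close>, hence \<open>\<psi>\<^sub>#\<mu>\<^sub>X = \<mu>\<^sub>Y\<close>, and \<open>\<psi>\<close> is onto because its compact image carries
  all the mass of the fully supported \<open>\<mu>\<^sub>Y\<close>.\<close>

section \<open>Compact metric spaces\<close>

context Metric_space
begin

lemma compact_space_imp_countable_dense:
  assumes "compact_space mtopology"
  obtains D where "countable D" "D \<subseteq> M" "\<And>x e. x \<in> M \<Longrightarrow> e > 0 \<Longrightarrow> \<exists>s\<in>D. d s x < e"
proof -
  have "mtotally_bounded M"
    using assms compactin_imp_mtotally_bounded unfolding compact_space_def by simp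
  then have "\<forall>m::nat. \<exists>K. finite K \<and> K \<subseteq> M \<and> M \<subseteq> (\<Union>x\<in>K. mball x (1 / Suc m))"
    unfolding mtotally_bounded_def by simp
  then obtain K where K: "\<And>m. finite (K m) \<and> K m \<subseteq> M \<and> M \<subseteq> (\<Union>x\<in>K m. mball x (1 / Suc m))"
    by metis
  show thesis
  proof (rule that[of "\<Union>m. K m"])
    show "countable (\<Union>m. K m)" using K by (simp add: countable_finite)
    show "(\<Union>m. K m) \<subseteq> M" using K by blast
    fix x e assume "x \<in> M" "(e::real) > 0"
    then obtain m where m: "1 / real (Suc m) < e"
      using nat_approx_posE by blast
    obtain s where "s \<in> K m" "x \<in> mball s (1 / Suc m)"
      using K[of m] \<open>x \<in> M\<close> by blast
    moreover from this(2) have "d s x < e"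
      using m by simp
    ultimately show "\<exists>s\<in>\<Union>m. K m. d s x < e"
      by blast
  qed
qed

lemma compact_space_imp_countable_pi_base:
  assumes "compact_space mtopology" "M \<noteq> {}"
  obtains B :: "nat \<Rightarrow> 'a set"
  where "\<And>k. openin mtopology (B k)" "\<And>k. B k \<noteq> {}"
    "\<And>x e. x \<in> M \<Longrightarrow> e > 0 \<Longrightarrow> \<exists>k. B k \<subseteq> mball x e"
proof -
  obtain D where D: "countable D" "D \<subseteq> M" "\<And>x e. x \<in> M \<Longrightarrow> e > 0 \<Longrightarrow> \<exists>s\<in>D. d s x < e"
    using compact_space_imp_countable_dense[OF assms(1)] by blast
  obtain x0 where "x0 \<in> M"
    using assms(2) by blast
  then have "D \<noteq> {}"
    using D(3)[of x0 1] by auto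
  define c where "c i = from_nat_into D i" for i
  have cM: "c i \<in> M" for i
    unfolding c_def using D(2) from_nat_into[OF \<open>D \<noteq> {}\<close>, of i] by (rule subsetD)
  define B where "B k = mball (c (fst (prod_decode k))) (1 / Suc (snd (prod_decode k)))" for k
  show thesis
  proof (rule that[of B])
    show "openin mtopology (B k)" for k
      unfolding B_def by simp
    show "B k \<noteq> {}" for k
    proof -
      have "c (fst (prod_decode k)) \<in> B k"
        unfolding B_def using cM by simp
      then show ?thesis by blast
    qed
    fix x e assume x: "x \<in> M" and "(e::real) > 0"
    then obtain m where m: "1 / real (Suc m) < e / 2"
      using half_gt_zero nat_approx_posE by blast
    have "1 / real (Suc m) > 0"
      by simp
    then obtain s where s: "s \<in> D" "d s x < 1 / Suc m"
      using D(3)[OF x] by blast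
    obtain i where i: "c i = s"
      unfolding c_def using from_nat_into_surj[OF D(1) s(1)] by blast
    have "B (prod_encode (i, m)) \<subseteq> mball x e"
    proof
      fix y assume "y \<in> B (prod_encode (i, m))"
      then have y: "y \<in> M" "d s y < 1 / Suc m"
        unfolding B_def by (auto simp: i)
      have "d x y \<le> d x s + d s y"
        using x y(1) s(1) D(2) triangle by blast
      then have "d x y < e"
        using y(2) s(2) m commute[of x s] by linarith
      then show "y \<in> mball x e"
        using x y(1) by simp
    qed
    then show "\<exists>k. B k \<subseteq> mball x e" by blast
  qed
qed

lemma abs_dist_diff_le:
  assumes "x \<in> M" "y \<in> M" "a \<in> M" "b \<in> M"
  shows "\<bar>d x y - d a b\<bar> \<le> d x a + d y b"
  using triangle[of x a y] triangle[of a b y] triangle[of a x b] triangle[of x y b]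
    commute[of a x] commute[of b y] assms
  by linarith

lemma limitin_imp_tendsto_dist:
  assumes "limitin mtopology f a sequentially" "limitin mtopology g b sequentially"
  shows "(\<lambda>n. d (f n) (g n)) \<longlonglongrightarrow> d a b"
proof (rule LIMSEQ_I)
  fix e :: real assume "e > 0"
  have "a \<in> M" "b \<in> M"
    using assms limitin_mspace by blast+
  have "\<forall>\<^sub>F n in sequentially. f n \<in> M \<and> d (f n) a < e/2"
    "\<forall>\<^sub>F n in sequentially. g n \<in> M \<and> d (g n) b < e/2"
    using assms \<open>e > 0\<close> half_gt_zero limitin_metric by blast+
  then have "\<forall>\<^sub>F n in sequentially. norm (d (f n) (g n) - d a b) < e"
  proof eventually_elim
    case (elim n)
    then show ?case
      using abs_dist_diff_le[of "f n" "g n" a b] \<open>a \<in> M\<close> \<open>b \<in> M\<close> by simp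
  qed
  then show "\<exists>N. \<forall>n\<ge>N. norm (d (f n) (g n) - d a b) < e"
    by (simp add: eventually_sequentially)
qed

lemma dense_sequence_limitin:
  assumes "\<And>x e. x \<in> M \<Longrightarrow> e > 0 \<Longrightarrow> \<exists>k. d x (z k) < e" "range z \<subseteq> M" "x \<in> M"
  obtains kk where "limitin mtopology (\<lambda>m. z (kk m)) x sequentially"
proof -
  have "\<forall>m. \<exists>k. d x (z k) < 1 / Suc m"
    using assms(1)[OF assms(3)] by simp
  then obtain kk where kk: "\<And>m. d x (z (kk m)) < 1 / Suc m"
    by metis
  have "limitin mtopology (\<lambda>m. z (kk m)) x sequentially"
    unfolding limit_metric_sequentially
  proof (intro conjI allI impI)
    fix e :: real assume "e > 0"
    then obtain N where N: "1 / real (Suc N) < e"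
      using nat_approx_posE by blast
    have "d (z (kk n)) x < e" if "n \<ge> N" for n
    proof -
      have "1 / real (Suc n) \<le> 1 / Suc N"
        using that by (simp add: frac_le)
      then show ?thesis
        using kk[of n] N commute[of x "z (kk n)"] by linarith
    qed
    then show "\<exists>N. \<forall>n\<ge>N. z (kk n) \<in> M \<and> d (z (kk n)) x < e"
      using assms(2) by blast
  qed (fact assms(3))
  then show thesis by (rule that)
qed

lemma closedin_eq_Inter_thickenings:
  assumes "closedin mtopology C"
  shows "(\<Inter>k. \<Union>c\<in>C. mball c (1 / Suc k)) = C"
proof
  show "C \<subseteq> (\<Inter>k. \<Union>c\<in>C. mball c (1 / Suc k))"
    using assms closedin_subset by fastforce
  show "(\<Inter>k. \<Union>c\<in>C. mball c (1 / Suc k)) \<subseteq> C"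
  proof
    fix y assume y: "y \<in> (\<Inter>k. \<Union>c\<in>C. mball c (1 / Suc k))"
    show "y \<in> C"
    proof (rule ccontr)
      assume "y \<notin> C"
      moreover have "y \<in> M" using y by auto
      ultimately obtain r where r: "r > 0" "disjnt C (mball y r)"
        using assms unfolding closedin_metric by blast
      then obtain k where "1 / real (Suc k) < r"
        using nat_approx_posE by blast
      moreover obtain c where "c \<in> C" "y \<in> mball c (1 / Suc k)"
        using y by blast
      ultimately show False
        using r(2) commute[of c y] by (auto simp: disjnt_def)
    qed
  qed
qed

lemma dist_less_eq_Union_mball_Times:
  assumes "D \<subseteq> M" "\<And>x e. x \<in> M \<Longrightarrow> e > 0 \<Longrightarrow> \<exists>s\<in>D. d s x < e"
  shows "{z \<in> M \<times> M. d (fst z) (snd z) < r}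
    = (\<Union>(s, q, q') \<in> D \<times> (\<rat> :: real set) \<times> (\<rat> :: real set).
        if q + q' < r then mball s q \<times> mball s q' else {})"
    (is "?lhs = (\<Union>i \<in> ?I. ?A i)")
proof
  show "(\<Union>i \<in> ?I. ?A i) \<subseteq> ?lhs"
  proof
    fix z assume "z \<in> (\<Union>i \<in> ?I. ?A i)"
    then obtain s q q' where "q + q' < r" "fst z \<in> mball s q" "snd z \<in> mball s q'"
      by (auto split: if_splits)
    then show "z \<in> ?lhs"
      using triangle[of "fst z" s "snd z"] commute[of s "fst z"] by (auto simp: mem_Times_iff)
  qed
  show "?lhs \<subseteq> (\<Union>i \<in> ?I. ?A i)"
  proof
    fix z assume "z \<in> ?lhs"
    then obtain x y where z: "z = (x, y)" "x \<in> M" "y \<in> M" "d x y < r"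
      by auto
    define \<delta> where "\<delta> = (r - d x y) / 4"
    have "\<delta> > 0"
      using \<open>d x y < r\<close> by (simp add: \<delta>_def)
    then obtain s where s: "s \<in> D" "d s x < \<delta>"
      using assms(2)[OF z(2)] by blast
    obtain q where q: "q \<in> \<rat>" "d s x < q" "q < d s x + \<delta>"
      using Rats_dense_in_real[of "d s x" "d s x + \<delta>"] \<open>\<delta> > 0\<close> by auto
    obtain q' where q': "q' \<in> \<rat>" "d s y < q'" "q' < d s y + \<delta>"
      using Rats_dense_in_real[of "d s y" "d s y + \<delta>"] \<open>\<delta> > 0\<close> by auto
    have "s \<in> M"
      using s(1) assms(1) by blast
    then have "d s y \<le> d s x + d x y"
      using triangle z(2,3) by blast
    moreover have "4 * \<delta> = r - d x y"
      by (simp add: \<delta>_def)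
    ultimately have "q + q' < r"
      using q q' s(2) by linarith
    then have "z \<in> ?A (s, q, q')"
      using z \<open>s \<in> M\<close> q q' by auto
    moreover have "(s, q, q') \<in> ?I"
      using s q q' by auto
    ultimately show "z \<in> (\<Union>i \<in> ?I. ?A i)"
      by blast
  qed
qed

lemma compact_space_diagonal_subsequence:
  fixes s :: "nat \<Rightarrow> nat \<Rightarrow> 'a"
  assumes "compact_space mtopology" "\<And>n k. s n k \<in> M"
  obtains r where "strict_mono r" "\<And>k. \<exists>l. limitin mtopology (\<lambda>n. s (r n) k) l sequentially"
proof -
  define P where "P k r \<longleftrightarrow> (\<exists>l. limitin mtopology (\<lambda>n. s (r n) k) l sequentially)"
    for k and r :: "nat \<Rightarrow> nat"
  interpret subseqs P
  proof
    fix k and f :: "nat \<Rightarrow> nat"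
    have "range (\<lambda>n. s (f n) k) \<subseteq> M"
      using assms(2) by auto
    then obtain l g where "strict_mono g" "limitin mtopology ((\<lambda>n. s (f n) k) \<circ> g) l sequentially"
      using assms(1) unfolding compact_space_sequentially by blast
    then show "\<exists>g. strict_mono g \<and> P k (f \<circ> g)"
      unfolding P_def by (auto simp: o_def)
  qed
  have "P k diagseq" for k
  proof -
    have "P k (diagseq \<circ> (+) (Suc k))"
    proof (rule diagseq_holds)
      fix r g :: "nat \<Rightarrow> nat" and n assume "strict_mono r" "P n g"
      then show "P n (g \<circ> r)"
        unfolding P_def using limitin_subsequence[where f="\<lambda>m. s (g m) n"] by (auto simp: o_def)
    qed
    then obtain l where "limitin mtopology (\<lambda>n. s (diagseq (n + Suc k)) k) l sequentially"
      unfolding P_def by (auto simp: add.commute)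
    then have "limitin mtopology (\<lambda>n. s (diagseq n) k) l sequentially"
      by (rule limitin_sequentially_offset_rev)
    then show ?thesis
      unfolding P_def by blast
  qed
  then show thesis
    using that[OF subseq_diagseq] unfolding P_def by blast
qed

lemma limitin_of_approximating_limits:
  assumes "y \<in> M" "\<And>n. a n \<in> M" "\<And>k. limitin mtopology (b k) (c k) sequentially"
    and "\<And>k. (\<lambda>n. d (a n) (b k n)) \<longlonglongrightarrow> \<delta> k" "\<And>k. d (c k) y \<le> \<delta> k"
    and "\<And>e. e > 0 \<Longrightarrow> \<exists>k. \<delta> k < e"
  shows "limitin mtopology a y sequentially"
proof -
  have "\<forall>\<^sub>F n in sequentially. a n \<in> M \<and> d (a n) y < e" if "e > 0" for e
  proof -
    obtain k where k: "\<delta> k < e / 3"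
      using assms(6) \<open>e > 0\<close> by (meson zero_less_divide_iff zero_less_numeral)
    have "c k \<in> M"
      using assms(3) limitin_mspace by blast
    have "\<forall>\<^sub>F n in sequentially. d (a n) (b k n) < e / 3"
      using assms(4) k by (rule order_tendstoD(2))
    moreover have "\<forall>\<^sub>F n in sequentially. b k n \<in> M \<and> d (b k n) (c k) < e / 3"
      using assms(3)[of k] \<open>e > 0\<close> unfolding limitin_metric by (meson zero_less_divide_iff zero_less_numeral)
    ultimately show ?thesis
    proof eventually_elim
      case (elim n)
      then have "d (a n) y \<le> d (a n) (b k n) + d (b k n) (c k) + d (c k) y"
        using triangle[of "a n" "b k n" y] triangle[of "b k n" "c k" y] assms(1) assms(2)[of n] \<open>c k \<in> M\<close>
        by linarith
      then show ?case
        using elim assms(2)[of n] assms(5)[of k] k by linarith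
    qed
  qed
  then show ?thesis
    unfolding limitin_metric using assms(1) by blast
qed

end

lemma indicator_le_liminf_of_limitin:
  assumes "openin T U" "limitin T \<sigma> l sequentially"
  shows "(indicator U l :: ennreal) \<le> liminf (\<lambda>n. indicator U (\<sigma> n))"
proof (cases "l \<in> U")
  case True
  then have "\<forall>\<^sub>F n in sequentially. \<sigma> n \<in> U"
    using assms unfolding limitin_def by blast
  then have "\<forall>\<^sub>F n in sequentially. (indicator U (\<sigma> n) :: ennreal) = 1"
    by eventually_elim simp
  then have "liminf (\<lambda>n. (indicator U (\<sigma> n) :: ennreal)) = 1"
    by (intro lim_imp_Liminf tendsto_eventually) auto
  then show ?thesis
    using True by simp
qed simp

lemma isometry_imp_continuous_map:
  assumes "Metric_space X dX" "Metric_space Y dY" "\<And>x. x \<in> X \<Longrightarrow> \<psi> x \<in> Y"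
    "\<And>x x'. x \<in> X \<Longrightarrow> x' \<in> X \<Longrightarrow> dY (\<psi> x) (\<psi> x') = dX x x'"
  shows "continuous_map (Metric_space.mtopology X dX) (Metric_space.mtopology Y dY) \<psi>"
proof -
  have "embedding_map (Metric_space.mtopology X dX) (Metric_space.mtopology Y dY) \<psi>"
    using assms by (intro Metric_space12.isometry_imp_embedding_map) (auto simp: Metric_space12_def)
  then show ?thesis
    unfolding embedding_map_def using continuous_map_in_subtopology homeomorphic_imp_continuous_map
    by blast
qed

lemma dense_sequence_isometric_limit_ex:
  assumes X: "Metric_space X dX" and Y: "Metric_space Y dY"
    and cY: "compact_space (Metric_space.mtopology Y dY)"
    and z: "\<And>k. z k \<in> X" "\<And>x e. x \<in> X \<Longrightarrow> e > 0 \<Longrightarrow> \<exists>k. dX x (z k) < e"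
    and w: "\<And>k. w k \<in> Y" "\<And>j k. dY (w j) (w k) = dX (z j) (z k)"
    and "x \<in> X"
  obtains kk y where "limitin (Metric_space.mtopology X dX) (\<lambda>m. z (kk m)) x sequentially"
    "limitin (Metric_space.mtopology Y dY) (\<lambda>m. w (kk m)) y sequentially"
proof -
  interpret MX: Metric_space X dX by fact
  interpret MY: Metric_space Y dY by fact
  obtain kk where kk: "limitin MX.mtopology (\<lambda>m. z (kk m)) x sequentially"
    using MX.dense_sequence_limitin[OF z(2) _ \<open>x \<in> X\<close>] z(1) by blast
  then have "MX.MCauchy (\<lambda>m. z (kk m))"
    using z(1) by (intro MX.convergent_imp_MCauchy) auto
  then have "MY.MCauchy (\<lambda>m. w (kk m))"
    using w unfolding MX.MCauchy_def MY.MCauchy_def by auto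
  then obtain y where "limitin MY.mtopology (\<lambda>m. w (kk m)) y sequentially"
    using MY.compact_space_imp_mcomplete[OF cY] unfolding MY.mcomplete_def by blast
  with kk show thesis
    by (rule that)
qed

text \<open>The isometry maps \<open>x\<close> to the limit of \<open>w\<close> along a subsequence of \<open>z\<close> converging to
  \<open>x\<close>; the limit exists because compact metric spaces are complete.\<close>

lemma isometry_extension_from_dense_sequence:
  assumes X: "Metric_space X dX" and Y: "Metric_space Y dY"
    and cY: "compact_space (Metric_space.mtopology Y dY)"
    and z: "\<And>k. z k \<in> X" "\<And>x e. x \<in> X \<Longrightarrow> e > 0 \<Longrightarrow> \<exists>k. dX x (z k) < e"
    and w: "\<And>k. w k \<in> Y" "\<And>j k. dY (w j) (w k) = dX (z j) (z k)"
  obtains \<psi> where "\<And>x. x \<in> X \<Longrightarrow> \<psi> x \<in> Y"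
    "\<And>x x'. x \<in> X \<Longrightarrow> x' \<in> X \<Longrightarrow> dY (\<psi> x) (\<psi> x') = dX x x'" "\<And>k. \<psi> (z k) = w k"
proof -
  interpret MX: Metric_space X dX by fact
  interpret MY: Metric_space Y dY by fact
  have "\<exists>kk y. limitin MX.mtopology (\<lambda>m. z (kk m)) x sequentially
      \<and> limitin MY.mtopology (\<lambda>m. w (kk m)) y sequentially" if "x \<in> X" for x
    using dense_sequence_isometric_limit_ex[OF X Y cY z w that] by blast
  then obtain kk \<psi> where
    limX: "\<And>x. x \<in> X \<Longrightarrow> limitin MX.mtopology (\<lambda>m. z (kk x m)) x sequentially" and
    limY: "\<And>x. x \<in> X \<Longrightarrow> limitin MY.mtopology (\<lambda>m. w (kk x m)) (\<psi> x) sequentially"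
    by metis
  have isometric: "dY (\<psi> x) (\<psi> x') = dX x x'" if "x \<in> X" "x' \<in> X" for x x'
  proof -
    have "(\<lambda>m. dY (w (kk x m)) (w (kk x' m))) \<longlonglongrightarrow> dY (\<psi> x) (\<psi> x')"
      using limY that by (intro MY.limitin_imp_tendsto_dist)
    moreover have "(\<lambda>m. dX (z (kk x m)) (z (kk x' m))) \<longlonglongrightarrow> dX x x'"
      using limX that by (intro MX.limitin_imp_tendsto_dist)
    ultimately show ?thesis
      using LIMSEQ_unique by (simp add: w(2))
  qed
  show thesis
  proof (rule that)
    show "\<psi> x \<in> Y" if "x \<in> X" for x
      using limY[OF that] MY.limitin_mspace by blast
    show "dY (\<psi> x) (\<psi> x') = dX x x'" if "x \<in> X" "x' \<in> X" for x x'
      using isometric that .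
    show "\<psi> (z k) = w k" for k
    proof -
      have "(\<lambda>m. dY (w (kk (z k) m)) (w k)) \<longlonglongrightarrow> dY (\<psi> (z k)) (w k)"
        using limY[OF z(1)] w(1) by (intro MY.limitin_imp_tendsto_dist) auto
      moreover have "(\<lambda>m. dX (z (kk (z k) m)) (z k)) \<longlonglongrightarrow> dX (z k) (z k)"
        using limX[OF z(1)] z(1) by (intro MX.limitin_imp_tendsto_dist) auto
      ultimately have "dY (\<psi> (z k)) (w k) = 0"
        using LIMSEQ_unique z(1) by (simp add: w(2))
      then show ?thesis
        using limY[OF z(1)] w(1) MY.limitin_mspace MY.zero by blast
    qed
  qed
qed

lemma dependent_nat_choice_insert:
  assumes "P {}" "\<And>S k. P S \<Longrightarrow> \<exists>y\<in>B k. P (insert y S)"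
  obtains z :: "nat \<Rightarrow> 'a" where "\<And>k. z k \<in> B k" "\<And>k. P (z ` {..k})"
proof -
  let ?R = "\<lambda>n yS. fst yS \<in> B n \<and> P (snd yS) \<and> (n = 0 \<longrightarrow> snd yS = {fst yS})"
  have "\<exists>f. \<forall>n. ?R n (f n) \<and> snd (f (Suc n)) = insert (fst (f (Suc n))) (snd (f n))"
  proof (rule dependent_nat_choice[where Q="\<lambda>_ yS yS'. snd yS' = insert (fst yS') (snd yS)"])
    obtain y where "y \<in> B 0" "P {y}"
      using assms by blast
    then show "\<exists>yS. ?R 0 yS"
      by (intro exI[of _ "(y, {y})"]) simp
  next
    fix yS n assume "?R n yS"
    then obtain y where "y \<in> B (Suc n)" "P (insert y (snd yS))"
      using assms(2) by blast
    then show "\<exists>yS'. ?R (Suc n) yS' \<and> snd yS' = insert (fst yS') (snd yS)"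
      by (intro exI[of _ "(y, insert y (snd yS))"]) simp
  qed
  then obtain f where f: "\<And>n. ?R n (f n)" "\<And>n. snd (f (Suc n)) = insert (fst (f (Suc n))) (snd (f n))"
    by blast
  have "snd (f k) = (\<lambda>n. fst (f n)) ` {..k}" for k
    by (induction k) (use f in \<open>auto simp: atMost_Suc\<close>)
  then show thesis
    using f(1) by (intro that[of "\<lambda>n. fst (f n)"]) auto
qed

section \<open>mm-spaces\<close>

lemma mm_spaceD:
  assumes "mm_space X d mu"
  shows "Metric_space X d" "compact_space (Metric_space.mtopology X d)" "prob_space mu"
    "space mu = X" "sets mu = sigma_sets X {U. openin (Metric_space.mtopology X d) U}"
    "\<And>U. openin (Metric_space.mtopology X d) U \<Longrightarrow> U \<noteq> {} \<Longrightarrow> emeasure mu U > 0"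
  using assms unfolding mm_space_def by auto

lemma mm_space_openin_sets:
  assumes "mm_space X d mu" "openin (Metric_space.mtopology X d) U"
  shows "U \<in> sets mu"
  using mm_spaceD(5)[OF assms(1)] assms(2) by auto

lemma transport_mapsD:
  assumes "\<phi> \<in> transport_maps muX muY"
  shows "\<phi> \<in> measurable muX muY" "distr muX muY \<phi> = muY"
  using assms unfolding transport_maps_def by auto

lemma mm_space_AE_imp_ex_in_open:
  assumes mm: "mm_space X d mu" and P: "AE x in mu. P x"
    and U: "openin (Metric_space.mtopology X d) U" "U \<noteq> {}"
  shows "\<exists>x\<in>U. P x"
proof (rule ccontr)
  assume "\<not> (\<exists>x\<in>U. P x)"
  obtain N where N: "{x \<in> space mu. \<not> P x} \<subseteq> N" "emeasure mu N = 0" "N \<in> sets mu"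
    using P by (rule AE_E)
  have "U \<subseteq> space mu"
    using U(1) mm_spaceD(4)[OF mm] Metric_space.openin_mtopology[OF mm_spaceD(1)[OF mm]] by blast
  then have "U \<subseteq> N"
    using N(1) \<open>\<not> (\<exists>x\<in>U. P x)\<close> by blast
  then have "emeasure mu U \<le> emeasure mu N"
    using N(3) by (rule emeasure_mono)
  then show False
    using mm_spaceD(6)[OF mm U] N(2) by simp
qed

text \<open>The \<open>\<sigma>\<close>-algebra of an mm-space is generated by its open sets, so the distance is
  measurable on the product only thanks to separability.\<close>

lemma mm_space_dist_measurable:
  assumes mm: "mm_space X d mu"
  shows "(\<lambda>z. d (fst z) (snd z)) \<in> borel_measurable (mu \<Otimes>\<^sub>M mu)"
proof (rule borel_measurableI_less)
  interpret Metric_space X d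
    using mm_spaceD(1)[OF mm] .
  fix r :: real
  obtain D where D: "countable D" "D \<subseteq> X" "\<And>x e. x \<in> X \<Longrightarrow> e > 0 \<Longrightarrow> \<exists>s\<in>D. d s x < e"
    using compact_space_imp_countable_dense[OF mm_spaceD(2)[OF mm]] by blast
  have "space (mu \<Otimes>\<^sub>M mu) = X \<times> X"
    using mm_spaceD(4)[OF mm] by (simp add: space_pair_measure)
  then have "{z \<in> space (mu \<Otimes>\<^sub>M mu). d (fst z) (snd z) < r}
      = (\<Union>(s, q, q') \<in> D \<times> (\<rat> :: real set) \<times> (\<rat> :: real set).
          if q + q' < r then mball s q \<times> mball s q' else {})"
    using dist_less_eq_Union_mball_Times[OF D(2,3)] by simp
  also have "\<dots> \<in> sets (mu \<Otimes>\<^sub>M mu)"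
  proof (rule sets.countable_UN'')
    show "countable (D \<times> (\<rat> :: real set) \<times> (\<rat> :: real set))"
      using D(1) countable_rat by (metis countable_SIGMA)
    have "mball s q \<in> sets mu" for s q
      by (rule mm_space_openin_sets[OF mm]) simp
    then show "(case i of (s, q, q') \<Rightarrow> if q + q' < r then mball s q \<times> mball s q' else {})
        \<in> sets (mu \<Otimes>\<^sub>M mu)" for i
      by (auto split: prod.split simp: pair_measureI)
  qed
  finally show "{z \<in> space (mu \<Otimes>\<^sub>M mu). d (fst z) (snd z) < r} \<in> sets (mu \<Otimes>\<^sub>M mu)" .
qed

lemma mm_space_distortion_measurable:
  assumes "mm_space X dX muX" "mm_space Y dY muY" "\<phi> \<in> measurable muX muY"
  shows "(\<lambda>z. \<bar>dX (fst z) (snd z) - dY (\<phi> (fst z)) (\<phi> (snd z))\<bar>) \<in> borel_measurable (muX \<Otimes>\<^sub>M muX)"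
proof -
  have "(\<lambda>z. (\<phi> (fst z), \<phi> (snd z))) \<in> measurable (muX \<Otimes>\<^sub>M muX) (muY \<Otimes>\<^sub>M muY)"
    using assms(3)
    by (intro measurable_Pair measurable_compose[OF measurable_fst] measurable_compose[OF measurable_snd])
  from measurable_compose[OF this mm_space_dist_measurable[OF assms(2)]]
  have "(\<lambda>z. dY (\<phi> (fst z)) (\<phi> (snd z))) \<in> borel_measurable (muX \<Otimes>\<^sub>M muX)"
    by simp
  then show ?thesis
    using mm_space_dist_measurable[OF assms(1)] by measurable
qed

lemma mm_space_continuous_map_measurable:
  assumes mmX: "mm_space X dX muX" and mmY: "mm_space Y dY muY"
    and \<psi>: "continuous_map (Metric_space.mtopology X dX) (Metric_space.mtopology Y dY) \<psi>"
  shows "\<psi> \<in> measurable muX muY"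
proof (rule measurable_sigma_sets[OF mm_spaceD(5)[OF mmY]])
  interpret MX: Metric_space X dX
    using mm_spaceD(1)[OF mmX] .
  interpret MY: Metric_space Y dY
    using mm_spaceD(1)[OF mmY] .
  show "{U. openin MY.mtopology U} \<subseteq> Pow Y"
    using MY.openin_mtopology by blast
  show "\<psi> \<in> space muX \<rightarrow> Y"
    using continuous_map_image_subset_topspace[OF \<psi>] mm_spaceD(4)[OF mmX] by auto
  fix U assume "U \<in> {U. openin MY.mtopology U}"
  then have "openin MX.mtopology {x \<in> X. \<psi> x \<in> U}"
    using openin_continuous_map_preimage[OF \<psi>] by simp
  moreover have "{x \<in> X. \<psi> x \<in> U} = \<psi> -` U \<inter> space muX"
    using mm_spaceD(4)[OF mmX] by auto
  ultimately show "\<psi> -` U \<inter> space muX \<in> sets muX"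
    using mm_space_openin_sets[OF mmX] by simp
qed

text \<open>Each new point is taken in the next member of a countable \<open>\<pi>\<close>-base from the
  full-measure set of points related to all earlier ones; full support makes that set dense.\<close>

lemma mm_space_dense_related_sequence:
  assumes mm: "mm_space X d mu" and Q: "AE x in mu. AE y in mu. Q x y"
    and sym: "\<And>x y. Q x y \<Longrightarrow> Q y x" and refl: "\<And>x. x \<in> X \<Longrightarrow> Q x x"
  obtains z :: "nat \<Rightarrow> 'a" where "\<And>k. z k \<in> X" "\<And>x e. x \<in> X \<Longrightarrow> e > 0 \<Longrightarrow> \<exists>k. d x (z k) < e"
    "\<And>j k. Q (z j) (z k)" "AE x in mu. \<forall>k. Q x (z k)"
proof -
  interpret Metric_space X d
    using mm_spaceD(1)[OF mm] .
  define Good where "Good = {x \<in> X. AE y in mu. Q x y}"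
  have "AE x in mu. x \<in> X"
    using AE_space[of mu] mm_spaceD(4)[OF mm] by simp
  with Q have AE_Good: "AE x in mu. x \<in> Good"
    unfolding Good_def by eventually_elim simp
  have "X \<noteq> {}"
    using prob_space.not_empty[OF mm_spaceD(3)[OF mm]] mm_spaceD(4)[OF mm] by simp
  obtain B :: "nat \<Rightarrow> 'a set" where B: "\<And>k. openin mtopology (B k)" "\<And>k. B k \<noteq> {}"
    "\<And>x e. x \<in> X \<Longrightarrow> e > 0 \<Longrightarrow> \<exists>k. B k \<subseteq> mball x e"
    using compact_space_imp_countable_pi_base[OF mm_spaceD(2)[OF mm] \<open>X \<noteq> {}\<close>] by blast
  define related where "related S \<longleftrightarrow> finite S \<and> S \<subseteq> Good \<and> (\<forall>a\<in>S. \<forall>b\<in>S. Q a b)" for S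
  have extend: "\<exists>y\<in>B k. related (insert y S)" if S: "related S" for k S
  proof -
    have "AE y in mu. \<forall>a\<in>S. Q a y"
      using S unfolding related_def Good_def by (intro AE_finite_allI) auto
    with AE_Good have "AE y in mu. y \<in> Good \<and> (\<forall>a\<in>S. Q a y)"
      by eventually_elim simp
    then have "\<exists>y\<in>B k. y \<in> Good \<and> (\<forall>a\<in>S. Q a y)"
      by (rule mm_space_AE_imp_ex_in_open[OF mm _ B(1,2)])
    then obtain y where y: "y \<in> B k" "y \<in> Good" "\<forall>a\<in>S. Q a y"
      by blast
    have "\<forall>a\<in>S. Q y a"
      using y(3) sym by blast
    moreover have "Q y y"
      using y(2) refl unfolding Good_def by simp
    ultimately show ?thesis
      using S y unfolding related_def by auto
  qed
  obtain z :: "nat \<Rightarrow> 'a" where z: "\<And>k. z k \<in> B k" "\<And>k. related (z ` {..k})"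
    using dependent_nat_choice_insert[of related B] extend by (auto simp: related_def)
  then have z_Good: "z k \<in> Good" for k
    unfolding related_def by blast
  show thesis
  proof (rule that)
    show "z k \<in> X" for k
      using z_Good unfolding Good_def by blast
    show "Q (z j) (z k)" for j k
      using z(2)[of "max j k"] unfolding related_def by simp
    show "\<exists>k. d x (z k) < e" if "x \<in> X" "e > 0" for x e
      using B(3)[OF that] z(1) by fastforce
    have "AE x in mu. Q x (z k)" for k
    proof -
      have "AE x in mu. Q (z k) x"
        using z_Good[of k] unfolding Good_def by simp
      then show ?thesis
        by eventually_elim (rule sym)
    qed
    then show "AE x in mu. \<forall>k. Q x (z k)"
      by (simp add: AE_all_countable)
  qed
qed

text \<open>Fatou's lemma, applied to the indicator of an open set.\<close>

lemma emeasure_distr_le_open_of_AE_limitin: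
  assumes mmY: "mm_space Y dY muY" and \<phi>: "\<And>n. \<phi> n \<in> transport_maps muX muY"
    and \<psi>: "\<psi> \<in> measurable muX muY"
    and lim: "AE x in muX. limitin (Metric_space.mtopology Y dY) (\<lambda>n. \<phi> n x) (\<psi> x) sequentially"
    and U: "openin (Metric_space.mtopology Y dY) U"
  shows "emeasure (distr muX muY \<psi>) U \<le> emeasure muY U"
proof -
  have U_sets: "U \<in> sets muY"
    by (rule mm_space_openin_sets[OF mmY U])
  have emeasure_distr_eq: "emeasure (distr muX muY f) U = (\<integral>\<^sup>+ x. indicator U (f x) \<partial>muX)"
    if f: "f \<in> measurable muX muY" for f
  proof -
    have "emeasure (distr muX muY f) U = (\<integral>\<^sup>+ y. indicator U y \<partial>(distr muX muY f))"
      using U_sets by simp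
    also have "\<dots> = (\<integral>\<^sup>+ x. indicator U (f x) \<partial>muX)"
      using U_sets by (intro nn_integral_distr[OF f]) simp
    finally show ?thesis .
  qed
  have "emeasure (distr muX muY \<psi>) U = (\<integral>\<^sup>+ x. indicator U (\<psi> x) \<partial>muX)"
    by (rule emeasure_distr_eq[OF \<psi>])
  also have "\<dots> \<le> (\<integral>\<^sup>+ x. liminf (\<lambda>n. indicator U (\<phi> n x)) \<partial>muX)"
    using lim by (intro nn_integral_mono_AE) (auto elim: AE_mp intro: indicator_le_liminf_of_limitin[OF U])
  also have "\<dots> \<le> liminf (\<lambda>n. \<integral>\<^sup>+ x. indicator U (\<phi> n x) \<partial>muX)"
    by (rule nn_integral_liminf)
      (rule measurable_compose[OF transport_mapsD(1)[OF \<phi>] borel_measurable_indicator[OF U_sets]])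
  also have "(\<lambda>n. \<integral>\<^sup>+ x. indicator U (\<phi> n x) \<partial>muX) = (\<lambda>n. emeasure muY U)"
    using emeasure_distr_eq[OF transport_mapsD(1)[OF \<phi>]] transport_mapsD(2)[OF \<phi>] by simp
  finally show ?thesis
    by (simp add: Liminf_const)
qed

lemma mm_space_emeasure_closed_le_of_open_le:
  assumes mm: "mm_space Y d mu" and nu: "finite_measure nu" "sets nu = sets mu"
    and le: "\<And>U. openin (Metric_space.mtopology Y d) U \<Longrightarrow> emeasure nu U \<le> emeasure mu U"
    and C: "closedin (Metric_space.mtopology Y d) C"
  shows "emeasure nu C \<le> emeasure mu C"
proof -
  interpret Metric_space Y d
    using mm_spaceD(1)[OF mm] .
  interpret MU: prob_space mu
    by (rule mm_spaceD(3)[OF mm])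
  define V where "V k = (\<Union>c\<in>C. mball c (1 / Suc k))" for k
  have V_open: "openin mtopology (V k)" for k
    unfolding V_def by auto
  then have V_sets: "range V \<subseteq> sets mu" "range V \<subseteq> sets nu"
    using mm_space_openin_sets[OF mm] nu(2) by auto
  have "decseq V"
  proof (rule decseq_SucI)
    fix k
    have "1 / real (Suc (Suc k)) \<le> 1 / real (Suc k)"
      by (simp add: frac_le)
    then show "V (Suc k) \<subseteq> V k"
      unfolding V_def by (auto intro: mball_subset_concentric[THEN subsetD])
  qed
  have "(\<lambda>k. emeasure nu (V k)) \<longlonglongrightarrow> emeasure nu (\<Inter>k. V k)"
    using V_sets(2) \<open>decseq V\<close> finite_measure.emeasure_finite[OF nu(1)]
    by (intro Lim_emeasure_decseq) auto
  moreover have "(\<lambda>k. emeasure mu (V k)) \<longlonglongrightarrow> emeasure mu (\<Inter>k. V k)"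
    using V_sets(1) \<open>decseq V\<close> MU.emeasure_finite
    by (intro Lim_emeasure_decseq) auto
  ultimately have "emeasure nu (\<Inter>k. V k) \<le> emeasure mu (\<Inter>k. V k)"
    using le[OF V_open] by (intro LIMSEQ_le) auto
  then show ?thesis
    using closedin_eq_Inter_thickenings[OF C] unfolding V_def by simp
qed

lemma mm_space_measure_eqI_open_le:
  assumes mm: "mm_space Y d mu" and nu: "prob_space nu" "sets nu = sets mu"
    and le: "\<And>U. openin (Metric_space.mtopology Y d) U \<Longrightarrow> emeasure nu U \<le> emeasure mu U"
  shows "nu = mu"
proof -
  interpret Metric_space Y d
    using mm_spaceD(1)[OF mm] .
  interpret N: prob_space nu
    by (rule nu(1))
  interpret MU: prob_space mu
    by (rule mm_spaceD(3)[OF mm])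
  have space_nu: "space nu = Y"
    using sets_eq_imp_space_eq[OF nu(2)] mm_spaceD(4)[OF mm] by simp
  have "emeasure nu U = emeasure mu U" if U: "openin mtopology U" for U
  proof -
    have U_sets: "U \<in> sets mu"
      by (rule mm_space_openin_sets[OF mm U])
    have "emeasure nu (Y - U) \<le> emeasure mu (Y - U)"
      using U by (intro mm_space_emeasure_closed_le_of_open_le[OF mm N.finite_measure_axioms nu(2) le])
        (auto intro: closedin_diff)
    then have "measure nu (Y - U) \<le> measure mu (Y - U)"
      by (simp add: N.emeasure_eq_measure MU.emeasure_eq_measure)
    moreover have "measure nu (Y - U) = 1 - measure nu U" "measure mu (Y - U) = 1 - measure mu U"
      using N.prob_compl[of U] MU.prob_compl[of U] U_sets nu(2) space_nu mm_spaceD(4)[OF mm] by simp_all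
    ultimately have "measure mu U \<le> measure nu U"
      by simp
    with le[OF U] show ?thesis
      by (simp add: N.emeasure_eq_measure MU.emeasure_eq_measure)
  qed
  then show ?thesis
  proof (intro measure_eqI_generator_eq[where E="{U. openin mtopology U}" and \<Omega>=Y and A="\<lambda>_. Y"])
    show "Int_stable {U. openin mtopology U}"
      by (auto simp: Int_stable_def openin_Int)
    show "{U. openin mtopology U} \<subseteq> Pow Y"
      using openin_mtopology by blast
    show "sets nu = sigma_sets Y {U. openin mtopology U}" "sets mu = sigma_sets Y {U. openin mtopology U}"
      using mm_spaceD(5)[OF mm] nu(2) by simp_all
    show "emeasure nu Y \<noteq> \<infinity>"
      using N.emeasure_space_1 space_nu by simp
  qed auto
qed

lemma mm_space_isometric_pushforward_surj:
  assumes mmX: "mm_space X dX muX" and mmY: "mm_space Y dY muY"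
    and \<psi>: "\<And>x. x \<in> X \<Longrightarrow> \<psi> x \<in> Y" "\<And>x x'. x \<in> X \<Longrightarrow> x' \<in> X \<Longrightarrow> dY (\<psi> x) (\<psi> x') = dX x x'"
    and \<psi>_meas: "\<psi> \<in> measurable muX muY" and \<psi>_distr: "distr muX muY \<psi> = muY"
  shows "\<psi> ` X = Y"
proof -
  interpret MX: Metric_space X dX
    using mm_spaceD(1)[OF mmX] .
  interpret MY: Metric_space Y dY
    using mm_spaceD(1)[OF mmY] .
  have "compactin MX.mtopology X"
    using mm_spaceD(2)[OF mmX] unfolding compact_space_def by simp
  then have "compactin MY.mtopology (\<psi> ` X)"
    using image_compactin isometry_imp_continuous_map[OF MX.Metric_space_axioms MY.Metric_space_axioms \<psi>]
    by fastforce
  then have "openin MY.mtopology (Y - \<psi> ` X)"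
    using compactin_imp_closedin[OF MY.Hausdorff_space_mtopology] unfolding closedin_def by simp
  moreover have "emeasure muY (Y - \<psi> ` X) = 0"
  proof -
    have "Y - \<psi> ` X \<in> sets muY"
      using mm_space_openin_sets[OF mmY] \<open>openin MY.mtopology (Y - \<psi> ` X)\<close> .
    then have "emeasure muY (Y - \<psi> ` X) = emeasure muX (\<psi> -` (Y - \<psi> ` X) \<inter> space muX)"
      using \<psi>_meas by (subst \<psi>_distr[symmetric]) (simp add: emeasure_distr)
    also have "\<psi> -` (Y - \<psi> ` X) \<inter> space muX = {}"
      using mm_spaceD(4)[OF mmX] by auto
    finally show ?thesis
      by simp
  qed
  ultimately have "Y - \<psi> ` X = {}"
    using mm_spaceD(6)[OF mmY] by fastforce
  then show ?thesis
    using \<psi>(1) by blast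
qed

section \<open>Minkowski's inequality\<close>

lemma powr_convex_nonneg:
  fixes p t x y :: real
  assumes p: "p \<ge> 1" and t: "0 \<le> t" "t \<le> 1" and "x \<ge> 0" "y \<ge> 0"
  shows "((1 - t) * x + t * y) powr p \<le> (1 - t) * x powr p + t * y powr p"
proof (cases "x > 0 \<and> y > 0")
  case True
  then show ?thesis
    using convex_onD[OF powr_convex[OF p] t] by simp
next
  case False
  have "s powr p \<le> s" if "0 \<le> s" "s \<le> 1" for s :: real
  proof -
    have "s powr p \<le> s powr 1"
      using that p by (intro powr_mono') auto
    then show ?thesis
      using that by simp
  qed
  then have "(s * z) powr p \<le> s * z powr p" if "0 \<le> s" "s \<le> 1" "z \<ge> 0" for s z :: real
    using that by (simp add: powr_mult mult_right_mono)
  moreover have "x = 0 \<or> y = 0"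
    using False \<open>x \<ge> 0\<close> \<open>y \<ge> 0\<close> by linarith
  ultimately show ?thesis
    using t p \<open>x \<ge> 0\<close> \<open>y \<ge> 0\<close> by auto
qed

lemma powr_add_le_weighted:
  fixes p a b u v :: real
  assumes p: "p \<ge> 1" and "a > 0" "b > 0" "u \<ge> 0" "v \<ge> 0"
  shows "(u + v) powr p
    \<le> ((a + b) / a) powr (p - 1) * u powr p + ((a + b) / b) powr (p - 1) * v powr p"
proof -
  define t where "t = b / (a + b)"
  have t: "0 \<le> t" "t \<le> 1" "1 - t = a / (a + b)"
    using assms by (auto simp: t_def field_simps)
  have "(1 - t) * (u / a) + t * (v / b) = (u + v) / (a + b)"
    using assms unfolding t(3) by (simp add: t_def add_divide_distrib)
  then have "u + v = (a + b) * ((1 - t) * (u / a) + t * (v / b))"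
    using assms by simp
  then have "(u + v) powr p = (a + b) powr p * ((1 - t) * (u / a) + t * (v / b)) powr p"
    using assms t by (simp add: powr_mult)
  also have "\<dots> \<le> (a + b) powr p * ((1 - t) * (u / a) powr p + t * (v / b) powr p)"
    using powr_convex_nonneg[OF p t(1,2), of "u / a" "v / b"] assms by (intro mult_left_mono) auto
  also have "\<dots> = ((a + b) / a) powr (p - 1) * u powr p + ((a + b) / b) powr (p - 1) * v powr p"
  proof -
    have "(a + b) powr p * (a / (a + b)) * (u / a) powr p = ((a + b) / a) powr (p - 1) * u powr p"
      "(a + b) powr p * (b / (a + b)) * (v / b) powr p = ((a + b) / b) powr (p - 1) * v powr p"
      using assms by (simp_all add: powr_divide powr_diff field_simps)
    then show ?thesis
      unfolding t(3) by (simp add: t_def algebra_simps)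
  qed
  finally show ?thesis .
qed

lemma ennroot_top [simp]: "ennroot p \<top> = \<top>"
  by (simp add: ennroot_def)

lemma ennroot_zero [simp]: "ennroot p 0 = 0"
  by (simp add: ennroot_def)

lemma ennroot_eq_ennreal: "x \<noteq> \<top> \<Longrightarrow> ennroot p x = ennreal (enn2real x powr (1 / p))"
  by (simp add: ennroot_def)

lemma ennroot_mono:
  assumes "p > 0" "x \<le> y"
  shows "ennroot p x \<le> ennroot p y"
proof (cases "y = \<top>")
  case False
  with assms(2) have "x \<noteq> \<top>"
    using top.extremum_unique by fastforce
  moreover have "enn2real x \<le> enn2real y"
    using assms(2) False by (simp add: enn2real_mono top.not_eq_extremum)
  ultimately show ?thesis
    using assms(1) False by (simp add: ennroot_eq_ennreal powr_mono2 ennreal_leI)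
qed simp

lemma ennroot_less_ennreal_root_imp_less:
  assumes "p > 0" "e > 0" "ennroot p x < ennreal (e powr (1 / p))"
  shows "x < ennreal e"
proof -
  have "x \<noteq> \<top>"
    using assms(3) by auto
  then have "enn2real x powr (1 / p) < e powr (1 / p)"
    using assms(3) by (simp add: ennroot_eq_ennreal ennreal_less_iff)
  then have "enn2real x < e"
    using assms(1,2) by (metis enn2real_nonneg linorder_not_le powr_mono2 less_eq_real_def
        zero_less_divide_1_iff)
  then show ?thesis
    using \<open>x \<noteq> \<top>\<close> by (metis enn2real_nonneg ennreal_enn2real_if ennreal_less_iff)
qed

lemma nn_integral_powr_add_le_weighted:
  fixes f g :: "'a \<Rightarrow> real"
  assumes p: "p \<ge> 1" and ab: "a > 0" "b > 0"
    and f: "f \<in> borel_measurable M" "\<And>x. x \<in> space M \<Longrightarrow> f x \<ge> 0"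
    and g: "g \<in> borel_measurable M" "\<And>x. x \<in> space M \<Longrightarrow> g x \<ge> 0"
  shows "(\<integral>\<^sup>+x. ennreal ((f x + g x) powr p) \<partial>M)
    \<le> ennreal (((a + b) / a) powr (p - 1)) * (\<integral>\<^sup>+x. ennreal (f x powr p) \<partial>M)
      + ennreal (((a + b) / b) powr (p - 1)) * (\<integral>\<^sup>+x. ennreal (g x powr p) \<partial>M)"
    (is "_ \<le> ennreal ?c1 * _ + ennreal ?c2 * _")
proof -
  have "(\<integral>\<^sup>+x. ennreal ((f x + g x) powr p) \<partial>M)
      \<le> (\<integral>\<^sup>+x. ennreal (?c1 * f x powr p) + ennreal (?c2 * g x powr p) \<partial>M)"
  proof (rule nn_integral_mono)
    fix x assume "x \<in> space M"
    then have "(f x + g x) powr p \<le> ?c1 * f x powr p + ?c2 * g x powr p"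
      using powr_add_le_weighted[OF p ab] f(2) g(2) by blast
    then show "ennreal ((f x + g x) powr p) \<le> ennreal (?c1 * f x powr p) + ennreal (?c2 * g x powr p)"
      by (simp add: ennreal_plus[symmetric] del: ennreal_plus)
  qed
  also have "\<dots> = ennreal ?c1 * (\<integral>\<^sup>+x. ennreal (f x powr p) \<partial>M)
      + ennreal ?c2 * (\<integral>\<^sup>+x. ennreal (g x powr p) \<partial>M)"
    using f(1) g(1) by (simp add: nn_integral_add ennreal_mult nn_integral_cmult)
  finally show ?thesis .
qed

lemma nn_integral_powr_add_le_powr_sum:
  fixes f g :: "'a \<Rightarrow> real"
  assumes p: "p \<ge> 1" and "e > 0"
    and f: "f \<in> borel_measurable M" "\<And>x. x \<in> space M \<Longrightarrow> f x \<ge> 0"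
    and g: "g \<in> borel_measurable M" "\<And>x. x \<in> space M \<Longrightarrow> g x \<ge> 0"
    and A: "A \<ge> 0" "(\<integral>\<^sup>+x. ennreal (f x powr p) \<partial>M) = ennreal (A powr p)"
    and B: "B \<ge> 0" "(\<integral>\<^sup>+x. ennreal (g x powr p) \<partial>M) = ennreal (B powr p)"
  shows "(\<integral>\<^sup>+x. ennreal ((f x + g x) powr p) \<partial>M) \<le> ennreal ((A + B + 2 * e) powr p)"
proof -
  define a b where "a = A + e" and "b = B + e"
  have "a > 0" "b > 0"
    using A(1) B(1) \<open>e > 0\<close> by (auto simp: a_def b_def)
  have weight: "((a + b) / c) powr (p - 1) * c powr p = (a + b) powr (p - 1) * c" if "c > 0" for c
    using that \<open>a > 0\<close> \<open>b > 0\<close> by (simp add: powr_divide powr_diff)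
  have "(\<integral>\<^sup>+x. ennreal ((f x + g x) powr p) \<partial>M)
      \<le> ennreal (((a + b) / a) powr (p - 1)) * ennreal (A powr p)
        + ennreal (((a + b) / b) powr (p - 1)) * ennreal (B powr p)"
    using nn_integral_powr_add_le_weighted[OF p \<open>a > 0\<close> \<open>b > 0\<close> f g] unfolding A(2) B(2) .
  also have "\<dots> \<le> ennreal (((a + b) / a) powr (p - 1) * a powr p + ((a + b) / b) powr (p - 1) * b powr p)"
    using A(1) B(1) p \<open>e > 0\<close>
    by (simp add: ennreal_mult[symmetric] ennreal_plus[symmetric] a_def b_def
        add_mono mult_left_mono powr_mono2 del: ennreal_plus)
  also have "\<dots> = ennreal ((a + b) powr (p - 1) * (a + b))"
    using weight[OF \<open>a > 0\<close>] weight[OF \<open>b > 0\<close>] by (simp add: distrib_left)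
  also have "\<dots> = ennreal ((a + b) powr p)"
    using powr_mult_base[of "a + b" "p - 1"] \<open>a > 0\<close> \<open>b > 0\<close> by (simp add: mult.commute)
  also have "a + b = A + B + 2 * e"
    by (simp add: a_def b_def)
  finally show ?thesis .
qed

lemma Minkowski_ennroot_nn_integral:
  fixes f g :: "'a \<Rightarrow> real"
  assumes p: "p \<ge> 1"
    and f: "f \<in> borel_measurable M" "\<And>x. x \<in> space M \<Longrightarrow> f x \<ge> 0"
    and g: "g \<in> borel_measurable M" "\<And>x. x \<in> space M \<Longrightarrow> g x \<ge> 0"
  shows "ennroot p (\<integral>\<^sup>+x. ennreal ((f x + g x) powr p) \<partial>M)
    \<le> ennroot p (\<integral>\<^sup>+x. ennreal (f x powr p) \<partial>M) + ennroot p (\<integral>\<^sup>+x. ennreal (g x powr p) \<partial>M)"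
proof (cases "(\<integral>\<^sup>+x. ennreal (f x powr p) \<partial>M) = \<top> \<or> (\<integral>\<^sup>+x. ennreal (g x powr p) \<partial>M) = \<top>")
  case False
  define F where "F = (\<integral>\<^sup>+x. ennreal (f x powr p) \<partial>M)"
  define G where "G = (\<integral>\<^sup>+x. ennreal (g x powr p) \<partial>M)"
  define S where "S = (\<integral>\<^sup>+x. ennreal ((f x + g x) powr p) \<partial>M)"
  define A where "A = enn2real F powr (1 / p)"
  define B where "B = enn2real G powr (1 / p)"
  have "p > 0"
    using p by simp
  have A: "A \<ge> 0" "F = ennreal (A powr p)" and B: "B \<ge> 0" "G = ennreal (B powr p)"
    using False \<open>p > 0\<close> by (auto simp: F_def G_def A_def B_def powr_powr ennreal_enn2real_if)
  note S_le = nn_integral_powr_add_le_powr_sum[OF p _ f g A[unfolded F_def] B[unfolded G_def],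
      folded S_def]
  then have "S \<noteq> \<top>"
    using S_le[of 1] by (auto simp: top_unique)
  have "enn2real S powr (1 / p) \<le> A + B"
  proof (rule field_le_epsilon)
    fix e :: real assume "e > 0"
    then have "enn2real S \<le> (A + B + e) powr p"
      using S_le[of "e / 2"] \<open>S \<noteq> \<top>\<close> by (simp add: enn2real_leI)
    then have "enn2real S powr (1 / p) \<le> ((A + B + e) powr p) powr (1 / p)"
      using \<open>p > 0\<close> by (simp add: powr_mono2)
    then show "enn2real S powr (1 / p) \<le> A + B + e"
      using \<open>p > 0\<close> A(1) B(1) \<open>e > 0\<close> by (simp add: powr_powr)
  qed
  then show ?thesis
    using False \<open>S \<noteq> \<top>\<close> A(1) B(1)
    by (simp add: S_def F_def G_def A_def B_def ennroot_eq_ennreal ennreal_plus[symmetric]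
        del: ennreal_plus)
qed auto

section \<open>Distortion of transport maps and the triangle inequality\<close>

definition gm_distortion ::
  "real \<Rightarrow> ('a \<Rightarrow> 'a \<Rightarrow> real) \<Rightarrow> 'a measure \<Rightarrow> ('b \<Rightarrow> 'b \<Rightarrow> real) \<Rightarrow> ('a \<Rightarrow> 'b) \<Rightarrow> ennreal" where
  "gm_distortion p dX muX dY \<phi> =
     (\<integral>\<^sup>+ z. ennreal (\<bar>dX (fst z) (snd z) - dY (\<phi> (fst z)) (\<phi> (snd z))\<bar> powr p) \<partial>(muX \<Otimes>\<^sub>M muX))"

lemma dGM_eq_INF_gm_distortion:
  "dGM p dX muX dY muY = (INF \<phi>\<in>transport_maps muX muY. ennroot p (gm_distortion p dX muX dY \<phi>))"
  unfolding dGM_def gm_distortion_def ..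

lemma transport_maps_comp:
  assumes "\<phi> \<in> transport_maps muX muY" "\<psi> \<in> transport_maps muY muZ"
  shows "\<psi> \<circ> \<phi> \<in> transport_maps muX muZ"
proof -
  have "distr muX muZ (\<psi> \<circ> \<phi>) = distr (distr muX muY \<phi>) muZ \<psi>"
    using distr_distr[OF transport_mapsD(1)[OF assms(2)] transport_mapsD(1)[OF assms(1)]] by simp
  then show ?thesis
    using assms measurable_comp unfolding transport_maps_def by fastforce
qed

lemma transport_maps_in_space:
  assumes "mm_space X dX muX" "mm_space Y dY muY" "\<phi> \<in> transport_maps muX muY" "x \<in> X"
  shows "\<phi> x \<in> Y"
  using measurable_space[OF transport_mapsD(1)[OF assms(3)]] mm_spaceD(4)[OF assms(1)]
    mm_spaceD(4)[OF assms(2)] assms(4)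
  by simp

lemma nn_integral_pair_transport:
  assumes "sigma_finite_measure muY" "\<phi> \<in> transport_maps muX muY"
    and h: "h \<in> borel_measurable (muY \<Otimes>\<^sub>M muY)"
  shows "(\<integral>\<^sup>+z. h (\<phi> (fst z), \<phi> (snd z)) \<partial>(muX \<Otimes>\<^sub>M muX)) = (\<integral>\<^sup>+z. h z \<partial>(muY \<Otimes>\<^sub>M muY))"
proof -
  note m = transport_mapsD[OF assms(2)]
  let ?\<Phi> = "\<lambda>(x, y). (\<phi> x, \<phi> y)"
  have \<Phi>: "?\<Phi> \<in> measurable (muX \<Otimes>\<^sub>M muX) (muY \<Otimes>\<^sub>M muY)"
    using m(1) by (simp add: split_beta')
  have "muY \<Otimes>\<^sub>M muY = distr (muX \<Otimes>\<^sub>M muX) (muY \<Otimes>\<^sub>M muY) ?\<Phi>"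
    using pair_measure_distr[OF m(1) m(1)] assms(1) unfolding m(2) by simp
  then have "(\<integral>\<^sup>+z. h z \<partial>(muY \<Otimes>\<^sub>M muY)) = (\<integral>\<^sup>+z. h z \<partial>(distr (muX \<Otimes>\<^sub>M muX) (muY \<Otimes>\<^sub>M muY) ?\<Phi>))"
    by (rule arg_cong)
  also have "\<dots> = (\<integral>\<^sup>+z. h (?\<Phi> z) \<partial>(muX \<Otimes>\<^sub>M muX))"
    using h by (intro nn_integral_distr[OF \<Phi>]) simp
  finally show ?thesis
    by (simp add: split_beta')
qed

lemma le_INF_add_INF_ennreal:
  fixes f :: "'i \<Rightarrow> ennreal" and g :: "'j \<Rightarrow> ennreal"
  assumes "\<And>a b. a \<in> A \<Longrightarrow> b \<in> B \<Longrightarrow> c \<le> f a + g b"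
  shows "c \<le> (INF a\<in>A. f a) + (INF b\<in>B. g b)"
proof (rule ennreal_le_epsilon)
  fix e :: real
  assume "(INF a\<in>A. f a) + (INF b\<in>B. g b) < \<top>" and "0 < e"
  then have "(INF a\<in>A. f a) + 0 < (INF a\<in>A. f a) + ennreal (e / 2)"
    "(INF b\<in>B. g b) + 0 < (INF b\<in>B. g b) + ennreal (e / 2)"
    by (auto simp only: ennreal_add_left_cancel_less) auto
  then obtain a b where "a \<in> A" "f a < (INF a\<in>A. f a) + ennreal (e / 2)"
    and "b \<in> B" "g b < (INF b\<in>B. g b) + ennreal (e / 2)"
    by (auto simp: INF_less_iff)
  then have "c \<le> ((INF a\<in>A. f a) + ennreal (e / 2)) + ((INF b\<in>B. g b) + ennreal (e / 2))"
    using assms[of a b] add_mono[of "f a" _ "g b"] by (simp add: order_trans)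
  also have "\<dots> = (INF a\<in>A. f a) + (INF b\<in>B. g b) + ennreal e"
    using \<open>0 < e\<close> by (simp add: ac_simps ennreal_plus[symmetric] del: ennreal_plus)
  finally show "c \<le> (INF a\<in>A. f a) + (INF b\<in>B. g b) + ennreal e" .
qed

lemma ennroot_gm_distortion_comp_le:
  assumes p: "p \<ge> 1" and mmX: "mm_space X dX muX" and mmY: "mm_space Y dY muY"
    and mmZ: "mm_space Z dZ muZ"
    and \<phi>: "\<phi> \<in> transport_maps muX muY" and \<psi>: "\<psi> \<in> transport_maps muY muZ"
  shows "ennroot p (gm_distortion p dX muX dZ (\<psi> \<circ> \<phi>))
    \<le> ennroot p (gm_distortion p dX muX dY \<phi>) + ennroot p (gm_distortion p dY muY dZ \<psi>)"
proof -
  define f where "f z = \<bar>dX (fst z) (snd z) - dY (\<phi> (fst z)) (\<phi> (snd z))\<bar>" for z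
  define g where "g z = \<bar>dY (fst z) (snd z) - dZ (\<psi> (fst z)) (\<psi> (snd z))\<bar>" for z
  have f_meas: "f \<in> borel_measurable (muX \<Otimes>\<^sub>M muX)"
    unfolding f_def by (rule mm_space_distortion_measurable[OF mmX mmY transport_mapsD(1)[OF \<phi>]])
  have g_meas: "g \<in> borel_measurable (muY \<Otimes>\<^sub>M muY)"
    unfolding g_def by (rule mm_space_distortion_measurable[OF mmY mmZ transport_mapsD(1)[OF \<psi>]])
  have g\<phi>_meas: "(\<lambda>z. g (\<phi> (fst z), \<phi> (snd z))) \<in> borel_measurable (muX \<Otimes>\<^sub>M muX)"
    using transport_mapsD(1)[OF \<phi>] g_meas by measurable
  have "ennroot p (gm_distortion p dX muX dZ (\<psi> \<circ> \<phi>))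
      \<le> ennroot p (\<integral>\<^sup>+z. ennreal ((f z + g (\<phi> (fst z), \<phi> (snd z))) powr p) \<partial>(muX \<Otimes>\<^sub>M muX))"
    unfolding gm_distortion_def using p
    by (intro ennroot_mono nn_integral_mono ennreal_leI powr_mono2) (auto simp: f_def g_def)
  also have "\<dots> \<le> ennroot p (\<integral>\<^sup>+z. ennreal (f z powr p) \<partial>(muX \<Otimes>\<^sub>M muX))
        + ennroot p (\<integral>\<^sup>+z. ennreal (g (\<phi> (fst z), \<phi> (snd z)) powr p) \<partial>(muX \<Otimes>\<^sub>M muX))"
    by (rule Minkowski_ennroot_nn_integral[OF p f_meas _ g\<phi>_meas]) (simp_all add: f_def g_def)
  also have "(\<integral>\<^sup>+z. ennreal (g (\<phi> (fst z), \<phi> (snd z)) powr p) \<partial>(muX \<Otimes>\<^sub>M muX))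
      = gm_distortion p dY muY dZ \<psi>"
    unfolding gm_distortion_def g_def[symmetric]
    using prob_space_imp_sigma_finite[OF mm_spaceD(3)[OF mmY]] \<phi>
    by (rule nn_integral_pair_transport[where h="\<lambda>z. ennreal (g z powr p)"]) (use g_meas in measurable)
  finally show ?thesis
    unfolding gm_distortion_def f_def .
qed

lemma dGM_triangle:
  assumes "p \<ge> 1" "mm_space X dX muX" "mm_space Y dY muY" "mm_space Z dZ muZ"
  shows "dGM p dX muX dZ muZ \<le> dGM p dX muX dY muY + dGM p dY muY dZ muZ"
  unfolding dGM_eq_INF_gm_distortion
proof (rule le_INF_add_INF_ennreal)
  fix \<phi> \<psi> assume \<phi>: "\<phi> \<in> transport_maps muX muY" and \<psi>: "\<psi> \<in> transport_maps muY muZ"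
  have "(INF \<xi>\<in>transport_maps muX muZ. ennroot p (gm_distortion p dX muX dZ \<xi>))
      \<le> ennroot p (gm_distortion p dX muX dZ (\<psi> \<circ> \<phi>))"
    by (rule INF_lower[OF transport_maps_comp[OF \<phi> \<psi>]])
  also have "\<dots> \<le> ennroot p (gm_distortion p dX muX dY \<phi>) + ennroot p (gm_distortion p dY muY dZ \<psi>)"
    by (rule ennroot_gm_distortion_comp_le[OF assms \<phi> \<psi>])
  finally show "(INF \<xi>\<in>transport_maps muX muZ. ennroot p (gm_distortion p dX muX dZ \<xi>))
      \<le> ennroot p (gm_distortion p dX muX dY \<phi>) + ennroot p (gm_distortion p dY muY dZ \<psi>)" .
qed

lemma mm_iso_imp_dGM_zero:
  assumes "mm_space X dX muX" "mm_iso X dX muX Y dY muY"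
  shows "dGM p dX muX dY muY = 0"
proof -
  obtain \<phi> where \<phi>: "\<phi> \<in> transport_maps muX muY" "\<forall>x\<in>X. \<forall>x'\<in>X. dY (\<phi> x) (\<phi> x') = dX x x'"
    using assms(2) unfolding mm_iso_def transport_maps_def by blast
  have "space (muX \<Otimes>\<^sub>M muX) = X \<times> X"
    using mm_spaceD(4)[OF assms(1)] by (simp add: space_pair_measure)
  then have "gm_distortion p dX muX dY \<phi> = (\<integral>\<^sup>+ z. 0 \<partial>(muX \<Otimes>\<^sub>M muX))"
    unfolding gm_distortion_def using \<phi>(2) by (intro nn_integral_cong) (auto simp: mem_Times_iff)
  moreover have "dGM p dX muX dY muY \<le> ennroot p (gm_distortion p dX muX dY \<phi>)"
    unfolding dGM_eq_INF_gm_distortion using \<phi>(1) by (rule INF_lower)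
  ultimately show ?thesis
    by simp
qed

section \<open>Spaces at distance zero are isomorphic\<close>

lemma tendsto_zero_if_summable_powr:
  fixes a :: "nat \<Rightarrow> real"
  assumes "p > 0" "(\<Sum>n. ennreal (a n powr p)) \<noteq> \<top>" "\<And>n. a n \<ge> 0"
  shows "a \<longlonglongrightarrow> 0"
proof -
  have "summable (\<lambda>n. a n powr p)"
    using assms(2) by (intro summable_suminf_not_top) auto
  then have "(\<lambda>n. (a n powr p) powr (1 / p)) \<longlonglongrightarrow> 0"
    using assms(1) by (intro tendsto_zero_powrI[where b="1 / p"] summable_LIMSEQ_zero) auto
  moreover have "(a n powr p) powr (1 / p) = a n" for n
    using assms(1,3) by (simp add: powr_powr)
  ultimately show ?thesis
    by simp
qed

lemma AE_suminf_nn_integral_finite: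
  assumes "\<And>n. f n \<in> borel_measurable M" "(\<Sum>n. \<integral>\<^sup>+x. f n x \<partial>M) \<noteq> \<top>"
  shows "AE x in M. (\<Sum>n. f n x) \<noteq> \<top>"
proof -
  have "(\<lambda>x. \<Sum>n. f n x) \<in> borel_measurable M"
    using assms(1) by measurable
  moreover have "(\<integral>\<^sup>+x. (\<Sum>n. f n x) \<partial>M) \<noteq> \<top>"
    using assms by (simp add: nn_integral_suminf)
  ultimately show ?thesis
    using nn_integral_PInf_AE by simp
qed

lemma dGM_zero_imp_small_distortion:
  assumes "p > 0" "dGM p dX muX dY muY = 0" "e > 0"
  obtains \<phi> where "\<phi> \<in> transport_maps muX muY" "gm_distortion p dX muX dY \<phi> < ennreal e"
proof -
  have "dGM p dX muX dY muY < ennreal (e powr (1 / p))"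
    using assms(2,3) by simp
  then obtain \<phi> where "\<phi> \<in> transport_maps muX muY"
    "ennroot p (gm_distortion p dX muX dY \<phi>) < ennreal (e powr (1 / p))"
    unfolding dGM_eq_INF_gm_distortion by (auto simp: INF_less_iff)
  then show thesis
    using that ennroot_less_ennreal_root_imp_less[OF assms(1,3)] by blast
qed

lemma summable_distortion_imp_AE_dist_convergence:
  assumes "p > 0" and mmX: "mm_space X dX muX" and mmY: "mm_space Y dY muY"
    and \<phi>: "\<And>n. \<phi> n \<in> measurable muX muY"
    and summable: "(\<Sum>n. gm_distortion p dX muX dY (\<phi> n)) \<noteq> \<top>"
  shows "AE x in muX. AE y in muX. (\<lambda>n. dY (\<phi> n x) (\<phi> n y)) \<longlonglongrightarrow> dX x y"
proof -
  interpret pair_sigma_finite muX muX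
    using prob_space_imp_sigma_finite[OF mm_spaceD(3)[OF mmX]] by (simp add: pair_sigma_finite_def)
  define g where "g n z = ennreal (\<bar>dX (fst z) (snd z) - dY (\<phi> n (fst z)) (\<phi> n (snd z))\<bar> powr p)"
    for n z
  have "g n \<in> borel_measurable (muX \<Otimes>\<^sub>M muX)" for n
    unfolding g_def using mm_space_distortion_measurable[OF mmX mmY \<phi>] by measurable
  then have "AE z in muX \<Otimes>\<^sub>M muX. (\<Sum>n. g n z) \<noteq> \<top>"
    using summable unfolding gm_distortion_def g_def by (rule AE_suminf_nn_integral_finite)
  then have "AE x in muX. AE y in muX. (\<Sum>n. g n (x, y)) \<noteq> \<top>"
    by (rule AE_pair)
  then show ?thesis
  proof (rule eventually_mono)
    fix x assume "AE y in muX. (\<Sum>n. g n (x, y)) \<noteq> \<top>"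
    then show "AE y in muX. (\<lambda>n. dY (\<phi> n x) (\<phi> n y)) \<longlonglongrightarrow> dX x y"
    proof (rule eventually_mono)
      fix y assume "(\<Sum>n. g n (x, y)) \<noteq> \<top>"
      then have "(\<lambda>n. \<bar>dX x y - dY (\<phi> n x) (\<phi> n y)\<bar>) \<longlonglongrightarrow> 0"
        by (intro tendsto_zero_if_summable_powr[OF \<open>p > 0\<close>]) (simp_all add: g_def)
      then have "(\<lambda>n. dX x y - (dX x y - dY (\<phi> n x) (\<phi> n y))) \<longlonglongrightarrow> dX x y - 0"
        by (intro tendsto_diff tendsto_const) (simp add: tendsto_rabs_zero_iff)
      then show "(\<lambda>n. dY (\<phi> n x) (\<phi> n y)) \<longlonglongrightarrow> dX x y"
        by simp
    qed
  qed
qed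

text \<open>Distortions below \<open>2\<^sup>-\<^sup>n\<close> have a finite sum, which gives almost everywhere
  convergence for the sequence itself rather than only for a subsequence.\<close>

lemma dGM_zero_imp_AE_dist_convergence:
  assumes p: "p \<ge> 1" and mmX: "mm_space X dX muX" and mmY: "mm_space Y dY muY"
    and "dGM p dX muX dY muY = 0"
  obtains \<phi> where "\<And>n. \<phi> n \<in> transport_maps muX muY"
    "AE x in muX. AE y in muX. (\<lambda>n. dY (\<phi> n x) (\<phi> n y)) \<longlonglongrightarrow> dX x y"
proof -
  have "p > 0"
    using p by simp
  have "\<exists>\<phi>. \<phi> \<in> transport_maps muX muY \<and> gm_distortion p dX muX dY \<phi> < ennreal ((1 / 2) ^ n)"
    for n
  proof -
    have "(1 / 2 :: real) ^ n > 0"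
      by simp
    then show ?thesis
      using dGM_zero_imp_small_distortion[OF \<open>p > 0\<close> assms(4)] by blast
  qed
  then obtain \<phi> where \<phi>: "\<And>n. \<phi> n \<in> transport_maps muX muY"
    "\<And>n. gm_distortion p dX muX dY (\<phi> n) < ennreal ((1 / 2) ^ n)"
    using choice[of "\<lambda>n \<phi>. \<phi> \<in> transport_maps muX muY \<and> gm_distortion p dX muX dY \<phi> < ennreal ((1 / 2) ^ n)"]
    by blast
  have "(\<Sum>n. gm_distortion p dX muX dY (\<phi> n)) \<le> (\<Sum>n. ennreal ((1 / 2) ^ n))"
    using \<phi>(2) by (intro suminf_le) (auto intro: less_imp_le)
  also have "\<dots> = ennreal 2"
  proof -
    have "(\<lambda>n. (1 / 2 :: real) ^ n) sums (1 / (1 - 1 / 2))"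
      by (rule geometric_sums) simp
    then show ?thesis
      by (subst suminf_ennreal_eq) auto
  qed
  finally have "(\<Sum>n. gm_distortion p dX muX dY (\<phi> n)) \<noteq> \<top>"
    by (auto simp: top_unique)
  with \<phi>(1) show thesis
    by (intro that summable_distortion_imp_AE_dist_convergence[OF \<open>p > 0\<close> mmX mmY]
        transport_mapsD(1))
qed

lemma AE_dist_convergence_imp_dense_limits:
  assumes mmX: "mm_space X dX muX" and mmY: "mm_space Y dY muY"
    and \<phi>: "\<And>n. \<phi> n \<in> transport_maps muX muY"
    and conv: "AE x in muX. AE y in muX. (\<lambda>n. dY (\<phi> n x) (\<phi> n y)) \<longlonglongrightarrow> dX x y"
  obtains z :: "nat \<Rightarrow> 'a" and r w where "\<And>k. z k \<in> X"
    "\<And>x e. x \<in> X \<Longrightarrow> e > 0 \<Longrightarrow> \<exists>k. dX x (z k) < e" "strict_mono r"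
    "\<And>k. limitin (Metric_space.mtopology Y dY) (\<lambda>n. \<phi> (r n) (z k)) (w k) sequentially"
    "\<And>j k. dY (w j) (w k) = dX (z j) (z k)"
    "AE x in muX. \<forall>k. (\<lambda>n. dY (\<phi> (r n) x) (\<phi> (r n) (z k))) \<longlonglongrightarrow> dX x (z k)"
proof -
  interpret MX: Metric_space X dX
    using mm_spaceD(1)[OF mmX] .
  interpret MY: Metric_space Y dY
    using mm_spaceD(1)[OF mmY] .
  define Q where "Q x y \<longleftrightarrow> (\<lambda>n. dY (\<phi> n x) (\<phi> n y)) \<longlonglongrightarrow> dX x y" for x y
  have "Q x y \<Longrightarrow> Q y x" for x y
    unfolding Q_def by (simp add: MX.commute MY.commute)
  moreover have "Q x x" if "x \<in> X" for x
    unfolding Q_def using transport_maps_in_space[OF mmX mmY \<phi> that] that by simp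
  ultimately obtain z :: "nat \<Rightarrow> 'a" where z: "\<And>k. z k \<in> X"
    "\<And>x e. x \<in> X \<Longrightarrow> e > 0 \<Longrightarrow> \<exists>k. dX x (z k) < e" "\<And>j k. Q (z j) (z k)"
    "AE x in muX. \<forall>k. Q x (z k)"
    using mm_space_dense_related_sequence[OF mmX conv[folded Q_def]] by blast
  obtain r where r: "strict_mono r" "\<And>k. \<exists>l. limitin MY.mtopology (\<lambda>n. \<phi> (r n) (z k)) l sequentially"
    using MY.compact_space_diagonal_subsequence[OF mm_spaceD(2)[OF mmY], of "\<lambda>n k. \<phi> n (z k)"]
      transport_maps_in_space[OF mmX mmY \<phi> z(1)] by blast
  then obtain w where w: "\<And>k. limitin MY.mtopology (\<lambda>n. \<phi> (r n) (z k)) (w k) sequentially"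
    by metis
  have Q_r: "(\<lambda>n. dY (\<phi> (r n) x) (\<phi> (r n) y)) \<longlonglongrightarrow> dX x y" if "Q x y" for x y
    using LIMSEQ_subseq_LIMSEQ[OF that[unfolded Q_def] r(1)] by (simp add: o_def)
  have "dY (w j) (w k) = dX (z j) (z k)" for j k
    using MY.limitin_imp_tendsto_dist[OF w w] Q_r[OF z(3)] by (rule LIMSEQ_unique)
  moreover from z(4) have "AE x in muX. \<forall>k. (\<lambda>n. dY (\<phi> (r n) x) (\<phi> (r n) (z k))) \<longlonglongrightarrow> dX x (z k)"
    by eventually_elim (simp add: Q_r)
  ultimately show thesis
    using that[OF z(1,2) r(1) w] by blast
qed

lemma AE_dist_convergence_imp_isometric_limit:
  assumes mmX: "mm_space X dX muX" and mmY: "mm_space Y dY muY"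
    and \<phi>: "\<And>n. \<phi> n \<in> transport_maps muX muY"
    and conv: "AE x in muX. AE y in muX. (\<lambda>n. dY (\<phi> n x) (\<phi> n y)) \<longlonglongrightarrow> dX x y"
  obtains \<phi>' \<psi> where "\<And>n. \<phi>' n \<in> transport_maps muX muY" "\<And>x. x \<in> X \<Longrightarrow> \<psi> x \<in> Y"
    "\<And>x x'. x \<in> X \<Longrightarrow> x' \<in> X \<Longrightarrow> dY (\<psi> x) (\<psi> x') = dX x x'"
    "AE x in muX. limitin (Metric_space.mtopology Y dY) (\<lambda>n. \<phi>' n x) (\<psi> x) sequentially"
proof -
  interpret MX: Metric_space X dX
    using mm_spaceD(1)[OF mmX] .
  interpret MY: Metric_space Y dY
    using mm_spaceD(1)[OF mmY] .
  obtain z :: "nat \<Rightarrow> 'a" and r w where z: "\<And>k. z k \<in> X"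
    "\<And>x e. x \<in> X \<Longrightarrow> e > 0 \<Longrightarrow> \<exists>k. dX x (z k) < e"
    and "strict_mono r" and w: "\<And>k. limitin MY.mtopology (\<lambda>n. \<phi> (r n) (z k)) (w k) sequentially"
      "\<And>j k. dY (w j) (w k) = dX (z j) (z k)"
    and AE_conv: "AE x in muX. \<forall>k. (\<lambda>n. dY (\<phi> (r n) x) (\<phi> (r n) (z k))) \<longlonglongrightarrow> dX x (z k)"
    using AE_dist_convergence_imp_dense_limits[OF mmX mmY \<phi> conv] by blast
  have "w k \<in> Y" for k
    using w(1) MY.limitin_mspace by blast
  then obtain \<psi> where \<psi>: "\<And>x. x \<in> X \<Longrightarrow> \<psi> x \<in> Y"
    "\<And>x x'. x \<in> X \<Longrightarrow> x' \<in> X \<Longrightarrow> dY (\<psi> x) (\<psi> x') = dX x x'" "\<And>k. \<psi> (z k) = w k"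
    using isometry_extension_from_dense_sequence[OF MX.Metric_space_axioms MY.Metric_space_axioms
        mm_spaceD(2)[OF mmY] z _ w(2)] by blast
  have "AE x in muX. x \<in> X"
    using AE_space[of muX] mm_spaceD(4)[OF mmX] by simp
  with AE_conv have "AE x in muX. limitin MY.mtopology (\<lambda>n. \<phi> (r n) x) (\<psi> x) sequentially"
  proof eventually_elim
    case (elim x)
    show ?case
    proof (rule MY.limitin_of_approximating_limits[where b="\<lambda>k n. \<phi> (r n) (z k)" and c=w
          and \<delta>="\<lambda>k. dX x (z k)", OF \<psi>(1)[OF elim(2)] _ w(1)])
      show "\<phi> (r n) x \<in> Y" for n
        using transport_maps_in_space[OF mmX mmY \<phi> elim(2)] .
      show "(\<lambda>n. dY (\<phi> (r n) x) (\<phi> (r n) (z k))) \<longlonglongrightarrow> dX x (z k)" for k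
        using elim(1) by blast
      show "dY (w k) (\<psi> x) \<le> dX x (z k)" for k
        using \<psi>(2)[OF z(1) elim(2)] \<psi>(3) MX.commute by simp
      show "\<exists>k. dX x (z k) < e" if "e > 0" for e
        using z(2)[OF elim(2) that] .
    qed
  qed
  with \<phi> \<psi>(1,2) show thesis
    by (rule that)
qed

lemma isometric_AE_limit_imp_mm_iso:
  assumes mmX: "mm_space X dX muX" and mmY: "mm_space Y dY muY"
    and \<phi>: "\<And>n. \<phi> n \<in> transport_maps muX muY"
    and \<psi>: "\<And>x. x \<in> X \<Longrightarrow> \<psi> x \<in> Y" "\<And>x x'. x \<in> X \<Longrightarrow> x' \<in> X \<Longrightarrow> dY (\<psi> x) (\<psi> x') = dX x x'"
    and lim: "AE x in muX. limitin (Metric_space.mtopology Y dY) (\<lambda>n. \<phi> n x) (\<psi> x) sequentially"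
  shows "mm_iso X dX muX Y dY muY"
proof -
  have \<psi>_meas: "\<psi> \<in> measurable muX muY"
    using isometry_imp_continuous_map[OF mm_spaceD(1)[OF mmX] mm_spaceD(1)[OF mmY] \<psi>]
    by (rule mm_space_continuous_map_measurable[OF mmX mmY])
  have \<psi>_distr: "distr muX muY \<psi> = muY"
    using prob_space.prob_space_distr[OF mm_spaceD(3)[OF mmX] \<psi>_meas]
    by (rule mm_space_measure_eqI_open_le[OF mmY])
      (auto intro: emeasure_distr_le_open_of_AE_limitin[OF mmY \<phi> \<psi>_meas lim])
  have "inj_on \<psi> X"
  proof (rule inj_onI)
    fix x x' assume "x \<in> X" "x' \<in> X" "\<psi> x = \<psi> x'"
    then have "dX x x' = 0"
      using \<psi> Metric_space.mdist_zero[OF mm_spaceD(1)[OF mmY]] by metis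
    then show "x = x'"
      using \<open>x \<in> X\<close> \<open>x' \<in> X\<close> Metric_space.zero[OF mm_spaceD(1)[OF mmX]] by blast
  qed
  moreover have "\<psi> ` X = Y"
    by (rule mm_space_isometric_pushforward_surj[OF mmX mmY \<psi> \<psi>_meas \<psi>_distr])
  ultimately show ?thesis
    unfolding mm_iso_def bij_betw_def using \<psi>(2) \<psi>_meas \<psi>_distr by blast
qed

lemma dGM_zero_imp_mm_iso:
  assumes "p \<ge> 1" "mm_space X dX muX" "mm_space Y dY muY" "dGM p dX muX dY muY = 0"
  shows "mm_iso X dX muX Y dY muY"
proof -
  obtain \<phi> where \<phi>: "\<And>n. \<phi> n \<in> transport_maps muX muY"
    and conv: "AE x in muX. AE y in muX. (\<lambda>n. dY (\<phi> n x) (\<phi> n y)) \<longlonglongrightarrow> dX x y"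
    using dGM_zero_imp_AE_dist_convergence[OF assms] by blast
  obtain \<phi>' \<psi> where "\<And>n. \<phi>' n \<in> transport_maps muX muY" "\<And>x. x \<in> X \<Longrightarrow> \<psi> x \<in> Y"
    "\<And>x x'. x \<in> X \<Longrightarrow> x' \<in> X \<Longrightarrow> dY (\<psi> x) (\<psi> x') = dX x x'"
    "AE x in muX. limitin (Metric_space.mtopology Y dY) (\<lambda>n. \<phi>' n x) (\<psi> x) sequentially"
    using AE_dist_convergence_imp_isometric_limit[OF assms(2,3) \<phi> conv] by blast
  then show ?thesis
    by (rule isometric_AE_limit_imp_mm_iso[OF assms(2,3)])
qed

theorem theorem2p1:
  fixes p :: real
    and X :: "'a set" and dX :: "'a \<Rightarrow> 'a \<Rightarrow> real" and muX :: "'a measure"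
    and Y :: "'b set" and dY :: "'b \<Rightarrow> 'b \<Rightarrow> real" and muY :: "'b measure"
    and Z :: "'c set" and dZ :: "'c \<Rightarrow> 'c \<Rightarrow> real" and muZ :: "'c measure"
  assumes "p \<ge> 1"
    and "mm_space X dX muX" and "mm_space Y dY muY" and "mm_space Z dZ muZ"
  shows "0 \<le> dGM p dX muX dY muY \<and> dGM p dX muX dY muY \<le> \<top>
    \<and> (dGM p dX muX dY muY = 0 \<longleftrightarrow> mm_iso X dX muX Y dY muY)
    \<and> dGM p dX muX dZ muZ \<le> dGM p dX muX dY muY + dGM p dY muY dZ muZ"
  using dGM_zero_imp_mm_iso[OF assms(1-3)] mm_iso_imp_dGM_zero[OF assms(2)]
    dGM_triangle[OF assms]
  by auto

end
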